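(* Let $\mathcal{G}=(\mathcal{V},\mathcal{E})$ be an undirected connected graph with vertex set $\mathcal{V}=\{1,\dots,m\}$, let $\mathcal{X}\subseteq\mathbb{R}^n$ be a closed convex set, and consider the problem $$\min_{\bm{x}=(x_1,\dots,x_m)\in\mathcal{X}^m}\ \sum_{i\in\mathcal{V}} f_i(x_i)\quad\text{subject to}\quad (P\otimes I_n)\bm{x}=\bm{x}.$$ Assume: (a) each $f_i:\mathbb{R}^n\to\mathbb{R}\cup\{+\infty\}$ is closed, proper and convex; (b) there is a pair $(\bm{x}^\star,\bm{\nu}^\star)$ such that for every $i\in\mathcal{V}$: $\sum_{j\in\mathcal{V}}P_{ij}x_j^\star=x_i^\star$, and there exists $g_i\in N_{\mathcal{X}}(x_i^\star)$ with $-\nu_i^\star+\sum_{j\in\mathcal{V}}P_{ij}\nu_j^\star-g_i\in\partial f_i(x_i^\star)$; (c) $\mathcal{D}\subseteq\mathbb{R}^n$ is an open convex set whose closure contains $\mathcal{X}$; for each $i\in\mathcal{V}$, $\varphi_i:\mathcal{D}\to\mathbb{R}$ is strictly convex (and differentiable); $\phi:\mathcal{D}\to\mathbb{R}$ is a mirror map with $B_\phi(u,v)\ge\frac{\mu}{2}\|u-v\|_p^2$ for all $u,v\in\mathcal{X}\cap\mathcal{D}$; (d) $P\in\mathbb{R}^{m\times m}$ is symmetric, stochastic, irreducible and positive semidefinite, with $P_{ij}>0$ only if $j\in\mathcal{N}(i)$. Let $\tau,\rho>0$, $\delta_1,\dots,\delta_m\ge0$, $\bm{x}^{(0)}\in\mathcal{X}^m\cap\mathcal{D}^m$,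 $\bm{\nu}^{(0)}=0$, and let $\{\bm{y}^{(t)},\bm{x}^{(t)},\bm{\nu}^{(t)}\}$ be generated by: for $t=0,1,2,\dots$ and every $i\in\mathcal{V}$, $$y_i^{(t)}=\operatorname*{argmin}_{y_i\in\mathcal{X}}\sum_{j\in\mathcal{V}}P_{ij}B_\phi(y_i,x_j^{(t)}),$$ $$x_i^{(t+1)}=\operatorname*{argmin}_{x_i\in\mathcal{X}}\ f_i(x_i)+\Big\langle x_i,\ \nu_i^{(t)}-\sum_{j\in\mathcal{V}}P_{ij}\nu_j^{(t)}\Big\rangle+\rho B_\phi(x_i,y_i^{(t)})+\delta_iB_{\varphi_i}(x_i,x_i^{(t)}),$$ $$\nu_i^{(t+1)}=\nu_i^{(t)}+\tau x_i^{(t+1)}-\tau\sum_{j\in\mathcal{V}}P_{ij}x_j^{(t+1)}.$$ Let $\sigma=\min\{1,n^{\frac{2}{p}-1}\}$, $0<\gamma<\mu\sigma$, $\tau\le\rho(\mu\sigma-\gamma)$, and $$V(0)=\frac{1}{2\tau\rho}\|\bm{\nu}^\star-\bm{\nu}^{(0)}\|_2^2+\sum_{i\in\mathcal{V}}B_\phi(x_i^\star,y_i^{(0)})+\sum_{i\in\mathcal{V}}\frac{\delta_i}{\rho}B_{\varphi_i}(x_i^\star,x_i^{(0)}).$$ For $T\ge1$ let $\bar{\bm{x}}^{(T)}=\frac1T\sum_{t=1}^T\bm{x}^{(t)}$ with blocks $\bar x_i^{(T)}$. Then $$\sum_{i\in\mathcal{V}}f_i(\bar x_i^{(T)})-\sum_{i\in\mathcal{V}}f_i(x_i^\star)\le\frac1T\Big(\rho\sum_{i\in\mathcal{V}}B_\phi(x_i^\star,y_i^{(0)})+\sum_{i\in\mathcal{V}}\delta_iB_{\varphi_i}(x_i^\star,x_i^{(0)})\Big)$$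 and $$\frac12\big\|((I_m-P)\otimes I_n)\bar{\bm{x}}^{(T)}\big\|_2^2\le\frac{V(0)}{\gamma T}.$$
   Context: $\mathcal{N}(i)$ is the set of neighbors of vertex $i$. $\bm{x}=[x_1^\top,\dots,x_m^\top]^\top\in\mathbb{R}^{mn}$; $\otimes$ is the Kronecker product. The normal cone is $N_{\mathcal{X}}(u)=\{g:\langle g,u-v\rangle\ge0\ \forall v\in\mathcal{X}\}$. A mirror map on open convex $\mathcal{D}$ is a differentiable strictly convex $\phi:\mathcal{D}\to\mathbb{R}$ whose gradient takes all values in $\mathbb{R}^n$ and whose gradient norm diverges at the boundary of the closure of $\mathcal{D}$. $B_\psi(u,v)=\psi(u)-\psi(v)-\langle\nabla\psi(v),u-v\rangle$ is the Bregman divergence. Stochastic means nonnegative entries with row sums 1. *)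

theory Defs
  imports "HOL-Analysis.Analysis" "HOL-Library.Extended_Real"
begin

definition strictly_convex_on :: "'a::real_vector set \<Rightarrow> ('a \<Rightarrow> real) \<Rightarrow> bool" where
  "strictly_convex_on S f \<longleftrightarrow>
     (\<forall>x\<in>S. \<forall>y\<in>S. \<forall>t::real. x \<noteq> y \<and> 0 < t \<and> t < 1 \<longrightarrow>
        f ((1 - t) *\<^sub>R x + t *\<^sub>R y) < (1 - t) * f x + t * f y)"

definition grad :: "(real^'n \<Rightarrow> real) \<Rightarrow> real^'n \<Rightarrow> real^'n" where
  "grad \<psi> v = (THE g. (\<psi> has_derivative (\<lambda>h. g \<bullet> h)) (at v))"

definition bregman :: "(real^'n \<Rightarrow> real) \<Rightarrow> real^'n \<Rightarrow> real^'n \<Rightarrow> real" where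
  "bregman \<psi> u v = \<psi> u - \<psi> v - grad \<psi> v \<bullet> (u - v)"

definition mirror_map :: "(real^'n) set \<Rightarrow> (real^'n \<Rightarrow> real) \<Rightarrow> bool" where
  "mirror_map D \<phi> \<longleftrightarrow> open D \<and> convex D \<and>
     (\<forall>x\<in>D. \<phi> differentiable (at x)) \<and> strictly_convex_on D \<phi> \<and>
     (\<forall>g. \<exists>x\<in>D. grad \<phi> x = g) \<and>
     (\<forall>z\<in>frontier (closure D).
        filterlim (\<lambda>x. norm (grad \<phi> x)) at_top (at z within D))"

definition pnorm :: "real \<Rightarrow> real^'n \<Rightarrow> real" where
  "pnorm p u = (\<Sum>k\<in>UNIV. \<bar>u $ k\<bar> powr p) powr (1 / p)"

definition normal_cone :: "(real^'n) set \<Rightarrow> real^'n \<Rightarrow> (real^'n) set" where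
  "normal_cone X u = {g. \<forall>v\<in>X. g \<bullet> (u - v) \<ge> 0}"

definition epigraph :: "(real^'n \<Rightarrow> ereal) \<Rightarrow> ((real^'n) \<times> real) set" where
  "epigraph f = {(x, r). f x \<le> ereal r}"

definition proper_fun :: "(real^'n \<Rightarrow> ereal) \<Rightarrow> bool" where
  "proper_fun f \<longleftrightarrow> (\<forall>x. f x \<noteq> -\<infinity>) \<and> (\<exists>x. f x \<noteq> \<infinity>)"

definition closed_fun :: "(real^'n \<Rightarrow> ereal) \<Rightarrow> bool" where
  "closed_fun f \<longleftrightarrow> closed (epigraph f)"

definition convex_fun :: "(real^'n \<Rightarrow> ereal) \<Rightarrow> bool" where
  "convex_fun f \<longleftrightarrow> convex (epigraph f)"

definition subdiff :: "(real^'n \<Rightarrow> ereal) \<Rightarrow> real^'n \<Rightarrow> (real^'n) set" where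
  "subdiff f x = {g. f x \<noteq> \<infinity> \<and> (\<forall>y. f y \<ge> f x + ereal (g \<bullet> (y - x)))}"

(* matrices on vertex set {0..<m} as functions nat => nat => real *)
definition symmetric_mat :: "nat \<Rightarrow> (nat \<Rightarrow> nat \<Rightarrow> real) \<Rightarrow> bool" where
  "symmetric_mat m P \<longleftrightarrow> (\<forall>i<m. \<forall>j<m. P i j = P j i)"

definition stochastic_mat :: "nat \<Rightarrow> (nat \<Rightarrow> nat \<Rightarrow> real) \<Rightarrow> bool" where
  "stochastic_mat m P \<longleftrightarrow> (\<forall>i<m. \<forall>j<m. 0 \<le> P i j) \<and> (\<forall>i<m. (\<Sum>j<m. P i j) = 1)"

definition irreducible_mat :: "nat \<Rightarrow> (nat \<Rightarrow> nat \<Rightarrow> real) \<Rightarrow> bool" where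
  "irreducible_mat m P \<longleftrightarrow>
     (\<forall>i<m. \<forall>j<m. (i, j) \<in> {(a, b). a < m \<and> b < m \<and> P a b \<noteq> 0}\<^sup>*)"

definition psd_mat :: "nat \<Rightarrow> (nat \<Rightarrow> nat \<Rightarrow> real) \<Rightarrow> bool" where
  "psd_mat m P \<longleftrightarrow> (\<forall>z::nat \<Rightarrow> real. 0 \<le> (\<Sum>i<m. \<Sum>j<m. z i * P i j * z j))"

definition connected_graph :: "nat \<Rightarrow> (nat \<Rightarrow> nat \<Rightarrow> bool) \<Rightarrow> bool" where
  "connected_graph m E \<longleftrightarrow> (\<forall>i j. E i j \<longrightarrow> i < m \<and> j < m \<and> E j i) \<and>
     (\<forall>i<m. \<forall>j<m. (i, j) \<in> {(a, b). E a b}\<^sup>*)"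

definition neighbors :: "(nat \<Rightarrow> nat \<Rightarrow> bool) \<Rightarrow> nat \<Rightarrow> nat set" where
  "neighbors E i = {j. E i j}"

end

theory Submission
  imports Defs
begin

(* A Lyapunov argument for the primal-dual iteration. For a multiplier l put
     V_l(t) = |nu(t) - l|^2 / (2 tau) + rho sum_i B_phi(x*_i, y_i(t)) + sum_i delta_i B_vphi_i(x*_i, x_i(t)).
   The first-order conditions of the x- and y-steps, the three-point identity of Bregman
   divergences and the dual update give
     gap(t) + <l, L x(t+1)> + rho gamma / 2 |L x(t+1)|^2 <= V_l(t) - V_l(t+1),
   where L = (I - P) (x) I_n and gap(t) is the objective gap at x(t+1). The quadratic term comes
   from the y-step: it is a weighted barycentre step, and for a symmetric stochastic positive
   semidefinite P the barycentric spread dominates |L x|^2; the p-norm hypothesis on phi is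
   first converted into Euclidean strong convexity with modulus mu sigma. Telescoping with l = 0
   (recall nu(0) = 0) bounds the summed objective gaps; with l = nu*, the saddle-point condition
   makes gap(t) + <nu*, L x(t+1)> nonnegative, which bounds the summed disagreements. Jensen's
   inequality transfers both bounds to the ergodic average. *)

section \<open>Comparing the p-norm with the Euclidean norm\<close>

lemma powr_convex_nonneg:
  assumes "(r::real) \<ge> 1"
  shows "convex_on {0..} (\<lambda>x. x powr r)"
proof (rule convex_on_linorderI)
  fix t x y :: real assume t: "0 < t" "t < 1" and xy: "x \<in> {0..}" "y \<in> {0..}" "x < y"
  show "((1 - t) *\<^sub>R x + t *\<^sub>R y) powr r \<le> (1 - t) * x powr r + t * y powr r"
  proof (cases "x = 0")
    case True
    have "t powr r * y powr r \<le> t * y powr r"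
      using powr_mono'[of 1 r t] t assms by (intro mult_right_mono) auto
    then show ?thesis using True t xy by (simp add: powr_mult)
  next
    case False
    then show ?thesis using convex_onD[OF powr_convex[OF assms], of t x y] t xy by auto
  qed
qed (simp add: convex_real_interval)

lemma powr_sum_le_sum_powr:
  fixes a :: "'a \<Rightarrow> real"
  assumes "finite S" "\<And>k. k \<in> S \<Longrightarrow> 0 \<le> a k" "0 < r" "r \<le> 1"
  shows "(\<Sum>k\<in>S. a k) powr r \<le> (\<Sum>k\<in>S. a k powr r)"
proof (cases "(\<Sum>k\<in>S. a k) = 0")
  case True
  then show ?thesis using assms by (simp add: sum_nonneg)
next
  case False
  define N where "N = (\<Sum>k\<in>S. a k)"
  have N: "N > 0" using False assms(2) N_def by (simp add: order_neq_le_trans sum_nonneg)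
  have "1 = (\<Sum>k\<in>S. a k / N)" using N by (simp add: N_def flip: sum_divide_distrib)
  also have "\<dots> \<le> (\<Sum>k\<in>S. (a k / N) powr r)"
  proof (rule sum_mono)
    fix k assume k: "k \<in> S"
    have "a k \<le> N" unfolding N_def using assms k by (intro member_le_sum) auto
    then have "(a k / N) powr 1 \<le> (a k / N) powr r"
      using assms k N by (intro powr_mono') auto
    then show "a k / N \<le> (a k / N) powr r" using assms k N by (cases "a k = 0") auto
  qed
  also have "\<dots> = (\<Sum>k\<in>S. a k powr r) / N powr r"
    using assms(2) N by (simp add: powr_divide sum_divide_distrib)
  finally show ?thesis using N by (simp add: N_def field_simps)
qed

lemma mean_powr_le_mean_of_powr:
  fixes a :: "'a \<Rightarrow> real"
  assumes "finite S" "S \<noteq> {}" "\<And>k. k \<in> S \<Longrightarrow> 0 \<le> a k" "r \<ge> 1"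
  shows "((\<Sum>k\<in>S. a k) / card S) powr r \<le> (\<Sum>k\<in>S. a k powr r) / card S"
proof -
  have "(\<Sum>k\<in>S. (1 / card S) *\<^sub>R a k) powr r \<le> (\<Sum>k\<in>S. (1 / card S) * a k powr r)"
    using assms by (intro convex_on_sum[OF _ _ powr_convex_nonneg]) (auto simp: card_gt_0_iff)
  then show ?thesis by (simp add: sum_divide_distrib)
qed

lemma pnorm_sq_eq:
  fixes u :: "real^'n"
  assumes "p > 0"
  shows "(pnorm p u)\<^sup>2 = (\<Sum>k\<in>UNIV. (u $ k)\<^sup>2 powr (p / 2)) powr (1 / (p / 2))"
proof -
  have abs_powr: "\<bar>u $ k\<bar> powr p = (u $ k)\<^sup>2 powr (p / 2)" for k
  proof (cases "u $ k = 0")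
    case False
    then have "(u $ k)\<^sup>2 = \<bar>u $ k\<bar> powr 2" by (simp flip: powr_realpow)
    then have "(u $ k)\<^sup>2 powr (p / 2) = \<bar>u $ k\<bar> powr (2 * (p / 2))"
      by (simp only: powr_powr)
    then show ?thesis by simp
  qed simp
  have "(pnorm p u)\<^sup>2 = (\<Sum>k\<in>UNIV. \<bar>u $ k\<bar> powr p) powr (1 / p + 1 / p)"
    unfolding pnorm_def power2_eq_square powr_add by simp
  then show ?thesis using abs_powr by simp
qed

lemma norm_sq_le_pnorm_sq:
  fixes u :: "real^'n"
  assumes "1 \<le> p"
  shows "min 1 (real CARD('n) powr (2 / p - 1)) * (norm u)\<^sup>2 \<le> (pnorm p u)\<^sup>2"
proof -
  define a where "a k = (u $ k)\<^sup>2" for k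
  define r where "r = p / 2"
  define S where "S = (\<Sum>k\<in>UNIV. a k powr r)"
  have a: "0 \<le> a k" for k by (simp add: a_def)
  have r: "r > 0" using assms by (simp add: r_def)
  have N: "(norm u)\<^sup>2 = (\<Sum>k\<in>UNIV. a k)"
    by (simp add: a_def norm_vec_def L2_set_def sum_nonneg)
  have pn: "(pnorm p u)\<^sup>2 = S powr (1 / r)"
    using pnorm_sq_eq[of p u] assms by (simp add: S_def a_def r_def)
  show ?thesis
  proof (cases "r \<le> 1")
    case True
    have "(\<Sum>k\<in>UNIV. a k) powr r \<le> S"
      unfolding S_def using a r True by (intro powr_sum_le_sum_powr) auto
    then have "((\<Sum>k\<in>UNIV. a k) powr r) powr (1 / r) \<le> S powr (1 / r)"
      using r by (intro powr_mono2) auto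
    then have "(norm u)\<^sup>2 \<le> (pnorm p u)\<^sup>2"
      using r a by (simp add: N pn powr_powr sum_nonneg)
    then show ?thesis
      by (rule order_trans[rotated]) (simp add: mult_left_le_one_le min_le_iff_disj)
  next
    case False
    define n where "n = real CARD('n)"
    have n: "n > 0" by (simp add: n_def)
    have "((\<Sum>k\<in>UNIV. a k) / n) powr r \<le> S / n"
      unfolding S_def n_def using a False by (intro mean_powr_le_mean_of_powr) auto
    then have "(((\<Sum>k\<in>UNIV. a k) / n) powr r) powr (1 / r) \<le> (S / n) powr (1 / r)"
      using r by (intro powr_mono2) auto
    then have "(norm u)\<^sup>2 / n \<le> S powr (1 / r) / n powr (1 / r)"
      using r a n by (simp add: N powr_powr powr_divide sum_nonneg)
    then have "n powr (1 / r - 1) * (norm u)\<^sup>2 \<le> (pnorm p u)\<^sup>2"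
      using n by (simp add: pn powr_diff field_simps)
    moreover have "1 / r - 1 = 2 / p - 1" by (simp add: r_def)
    ultimately show ?thesis
      by (simp add: n_def) (smt (verit, best) mult_right_mono zero_le_power2)
  qed
qed

section \<open>Block vectors and the mixing matrix\<close>

(* For the stacked vector u = (u_0, ..., u_{m-1}), mix m P u is (P \<otimes> I_n) u and
   disagreement m P u is ((I - P) \<otimes> I_n) u. *)
definition mix ::
    "nat \<Rightarrow> (nat \<Rightarrow> nat \<Rightarrow> real) \<Rightarrow> (nat \<Rightarrow> 'a::real_vector) \<Rightarrow> nat \<Rightarrow> 'a" where
  "mix m P u i = (\<Sum>j<m. P i j *\<^sub>R u j)"

definition disagreement ::
    "nat \<Rightarrow> (nat \<Rightarrow> nat \<Rightarrow> real) \<Rightarrow> (nat \<Rightarrow> 'a::real_vector) \<Rightarrow> nat \<Rightarrow> 'a" where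
  "disagreement m P u i = u i - mix m P u i"

definition binner :: "nat \<Rightarrow> (nat \<Rightarrow> 'a::real_inner) \<Rightarrow> (nat \<Rightarrow> 'a) \<Rightarrow> real" where
  "binner m u v = (\<Sum>i<m. u i \<bullet> v i)"

lemma binner_commute: "binner m u v = binner m v u"
  by (simp add: binner_def inner_commute)

lemma binner_diff_left: "binner m (\<lambda>i. u i - v i) w = binner m u w - binner m v w"
  by (simp add: binner_def inner_diff_left sum_subtractf)

lemma binner_diff_right: "binner m u (\<lambda>i. v i - w i) = binner m u v - binner m u w"
  by (simp add: binner_def inner_diff_right sum_subtractf)

lemma binner_self: "binner m u u = (\<Sum>i<m. (norm (u i))\<^sup>2)"
  by (simp add: binner_def power2_norm_eq_inner)

lemma binner_self_nonneg: "0 \<le> binner m u u"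
  by (simp add: binner_self sum_nonneg)

lemma disagreement_eq: "disagreement m P u = (\<lambda>i. u i - mix m P u i)"
  by (simp add: disagreement_def fun_eq_iff)

lemma mix_add: "mix m P (\<lambda>i. u i + v i) = (\<lambda>i. mix m P u i + mix m P v i)"
  by (simp add: mix_def fun_eq_iff scaleR_add_right sum.distrib)

lemma mix_disagreement: "mix m P (disagreement m P u) = disagreement m P (mix m P u)"
  by (simp add: disagreement_def mix_def fun_eq_iff scaleR_diff_right sum_subtractf)

lemma stochastic_mat_col_sum:
  assumes "symmetric_mat m P" "stochastic_mat m P" "j < m"
  shows "(\<Sum>i<m. P i j) = 1"
  using assms unfolding symmetric_mat_def stochastic_mat_def
  by (metis (no_types, lifting) lessThan_iff sum.cong)

lemma binner_mix_swap:
  fixes u v :: "nat \<Rightarrow> 'a::real_inner"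
  assumes "symmetric_mat m P"
  shows "binner m u (mix m P v) = binner m (mix m P u) v"
proof -
  have "binner m u (mix m P v) = (\<Sum>i<m. \<Sum>j<m. P i j * (u i \<bullet> v j))"
    by (simp add: binner_def mix_def inner_sum_right)
  also have "\<dots> = (\<Sum>j<m. \<Sum>i<m. P j i * (u i \<bullet> v j))"
    using assms by (subst sum.swap) (auto simp: symmetric_mat_def intro!: sum.cong)
  also have "\<dots> = binner m (mix m P u) v"
    by (simp add: binner_def mix_def inner_sum_left)
  finally show ?thesis .
qed

lemma binner_disagreement_swap:
  fixes u v :: "nat \<Rightarrow> 'a::real_inner"
  assumes "symmetric_mat m P"
  shows "binner m u (disagreement m P v) = binner m (disagreement m P u) v"
  using binner_mix_swap[OF assms]
  by (simp add: disagreement_eq binner_diff_left binner_diff_right)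

lemma binner_mix_self_nonneg:
  fixes u :: "nat \<Rightarrow> 'a::euclidean_space"
  assumes "psd_mat m P"
  shows "0 \<le> binner m u (mix m P u)"
proof -
  have "binner m u (mix m P u) = (\<Sum>i<m. \<Sum>j<m. P i j * (u i \<bullet> u j))"
    by (simp add: binner_def mix_def inner_sum_right)
  also have "\<dots> = (\<Sum>i<m. \<Sum>j<m. \<Sum>b\<in>Basis. (u i \<bullet> b) * P i j * (u j \<bullet> b))"
    by (intro sum.cong refl, subst euclidean_inner) (simp add: sum_distrib_left mult_ac)
  also have "\<dots> = (\<Sum>i<m. \<Sum>b\<in>Basis. \<Sum>j<m. (u i \<bullet> b) * P i j * (u j \<bullet> b))"
    by (intro sum.cong refl sum.swap)
  also have "\<dots> = (\<Sum>b\<in>Basis. \<Sum>i<m. \<Sum>j<m. (u i \<bullet> b) * P i j * (u j \<bullet> b))"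
    by (rule sum.swap)
  also have "\<dots> \<ge> 0"
    by (rule sum_nonneg, rule assms[unfolded psd_mat_def, rule_format])
  finally show ?thesis .
qed

lemma binner_disagreement_self:
  fixes u :: "nat \<Rightarrow> 'a::real_inner"
  assumes "symmetric_mat m P" "stochastic_mat m P"
  shows "binner m u (disagreement m P u) = (\<Sum>i<m. \<Sum>j<m. P i j * (norm (u i - u j))\<^sup>2) / 2"
proof -
  have rows: "(\<Sum>i<m. \<Sum>j<m. P i j * (norm (u i))\<^sup>2) = (\<Sum>i<m. (norm (u i))\<^sup>2)"
    using assms(2) by (intro sum.cong) (auto simp: stochastic_mat_def simp flip: sum_distrib_right)
  have cols: "(\<Sum>i<m. \<Sum>j<m. P i j * (norm (u j))\<^sup>2) = (\<Sum>j<m. (norm (u j))\<^sup>2)"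
    using stochastic_mat_col_sum[OF assms] by (subst sum.swap) (simp flip: sum_distrib_right)
  have "(\<Sum>i<m. \<Sum>j<m. P i j * (norm (u i - u j))\<^sup>2)
      = (\<Sum>i<m. \<Sum>j<m. P i j * (norm (u i))\<^sup>2) + (\<Sum>i<m. \<Sum>j<m. P i j * (norm (u j))\<^sup>2)
        - 2 * (\<Sum>i<m. \<Sum>j<m. P i j * (u i \<bullet> u j))"
    by (simp add: power2_norm_eq_inner inner_diff_left inner_diff_right inner_commute
        algebra_simps sum.distrib sum_subtractf sum_distrib_left)
  also have "(\<Sum>i<m. \<Sum>j<m. P i j * (u i \<bullet> u j)) = binner m u (mix m P u)"
    by (simp add: binner_def mix_def inner_sum_right)
  finally show ?thesis
    unfolding rows cols by (simp add: disagreement_eq binner_diff_right binner_self)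
qed

lemma binner_disagreement_self_nonneg:
  fixes u :: "nat \<Rightarrow> 'a::real_inner"
  assumes "symmetric_mat m P" "stochastic_mat m P"
  shows "0 \<le> binner m u (disagreement m P u)"
  using assms unfolding binner_disagreement_self[OF assms]
  by (auto simp: stochastic_mat_def intro!: sum_nonneg)

lemma mix_fixed_imp_consensus:
  fixes u :: "nat \<Rightarrow> 'a::real_inner"
  assumes "symmetric_mat m P" "stochastic_mat m P"
    and fixed: "\<And>i. i < m \<Longrightarrow> mix m P u i = u i"
    and "i < m" "j < m" "P i j \<noteq> 0"
  shows "u i = u j"
proof -
  have P0: "\<And>i j. i < m \<Longrightarrow> j < m \<Longrightarrow> 0 \<le> P i j"
    using assms(2) by (simp add: stochastic_mat_def)
  have "binner m u (disagreement m P u) = 0"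
    using fixed by (simp add: binner_def disagreement_def)
  then have "(\<Sum>i<m. \<Sum>j<m. P i j * (norm (u i - u j))\<^sup>2) = 0"
    by (simp add: binner_disagreement_self[OF assms(1,2)])
  then have "(\<Sum>j<m. P i j * (norm (u i - u j))\<^sup>2) = 0"
    using P0 \<open>i < m\<close> by (subst (asm) sum_nonneg_eq_0_iff) (auto intro!: sum_nonneg)
  then have "P i j * (norm (u i - u j))\<^sup>2 = 0"
    using P0 assms(4,5) by (subst (asm) sum_nonneg_eq_0_iff) auto
  then show ?thesis using assms(6) by simp
qed

lemma mix_fixed_sum:
  fixes u :: "nat \<Rightarrow> 'a::real_inner"
  assumes "symmetric_mat m P" "stochastic_mat m P"
    and fixed: "\<And>i. i < m \<Longrightarrow> mix m P u i = u i"
  shows "(\<Sum>i<m. \<Sum>j<m. P i j * g (u i) j) = (\<Sum>j<m. g (u j) j)"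
proof -
  have "(\<Sum>i<m. \<Sum>j<m. P i j * g (u i) j) = (\<Sum>j<m. \<Sum>i<m. P i j * g (u j) j)"
    using mix_fixed_imp_consensus[OF assms] by (subst sum.swap) (force intro!: sum.cong)
  also have "\<dots> = (\<Sum>j<m. g (u j) j)"
    using stochastic_mat_col_sum[OF assms(1,2)] by (simp flip: sum_distrib_right)
  finally show ?thesis .
qed

(* The cross term <L u, P u> = <P u, L (P u)> + <L u, P (L u)> is nonnegative because both
   L = I - P and P are positive semidefinite. *)
lemma norm_disagreement_sq_le:
  fixes u :: "nat \<Rightarrow> 'a::euclidean_space"
  assumes "symmetric_mat m P" "stochastic_mat m P" "psd_mat m P"
  shows "binner m (disagreement m P u) (disagreement m P u)
           \<le> binner m u u - binner m (mix m P u) (mix m P u)"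
proof -
  let ?P = "mix m P u" and ?L = "disagreement m P u"
  have u: "u = (\<lambda>i. ?P i + ?L i)" by (simp add: disagreement_eq)
  have "binner m ?L ?P = binner m ?L (mix m P ?P) + binner m ?L (mix m P ?L)"
    by (subst (2) u) (simp add: mix_add binner_def inner_add_right sum.distrib)
  also have "binner m ?L (mix m P ?P) = binner m ?P (disagreement m P ?P)"
    by (simp add: binner_mix_swap[OF assms(1)] mix_disagreement binner_commute)
  finally have "0 \<le> binner m ?L ?P"
    using binner_disagreement_self_nonneg[OF assms(1,2), of ?P]
      binner_mix_self_nonneg[OF assms(3), of ?L] by linarith
  moreover have "binner m ?L ?L = binner m u u - 2 * binner m u ?P + binner m ?P ?P"
    "binner m ?L ?P = binner m u ?P - binner m ?P ?P"
    by (simp_all add: disagreement_eq binner_diff_left binner_diff_right binner_commute[of m ?P u])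
  ultimately show ?thesis by simp
qed

lemma weighted_sq_dist_eq:
  fixes v :: "nat \<Rightarrow> 'a::real_inner"
  assumes "(\<Sum>j<m. w j) = 1"
  shows "(\<Sum>j<m. w j * (norm (y - v j))\<^sup>2)
           = (norm (y - (\<Sum>j<m. w j *\<^sub>R v j)))\<^sup>2 + (\<Sum>j<m. w j * (norm (v j))\<^sup>2)
             - (norm (\<Sum>j<m. w j *\<^sub>R v j))\<^sup>2"
proof -
  let ?c = "\<Sum>j<m. w j *\<^sub>R v j"
  have "(\<Sum>j<m. w j * (norm (y - v j))\<^sup>2)
      = (norm y)\<^sup>2 * (\<Sum>j<m. w j) - 2 * (y \<bullet> ?c) + (\<Sum>j<m. w j * (norm (v j))\<^sup>2)"
    by (simp add: power2_norm_eq_inner inner_diff_left inner_diff_right inner_commute algebra_simps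
        sum.distrib sum_subtractf sum_distrib_left sum_distrib_right inner_sum_right)
  then show ?thesis
    using assms by (simp add: power2_norm_eq_inner inner_diff_left inner_diff_right inner_commute)
qed

lemma norm_sq_minus_norm_mix_sq_le:
  fixes u y :: "nat \<Rightarrow> 'a::real_inner"
  assumes "symmetric_mat m P" "stochastic_mat m P"
  shows "binner m u u - binner m (mix m P u) (mix m P u)
           \<le> (\<Sum>i<m. \<Sum>j<m. P i j * (norm (y i - u j))\<^sup>2)"
proof -
  have "(\<Sum>i<m. \<Sum>j<m. P i j * (norm (u j))\<^sup>2) = binner m u u"
    using stochastic_mat_col_sum[OF assms]
    by (subst sum.swap) (simp add: binner_self flip: sum_distrib_right)
  then have "binner m u u - binner m (mix m P u) (mix m P u)
      = (\<Sum>i<m. (\<Sum>j<m. P i j * (norm (u j))\<^sup>2) - (norm (mix m P u i))\<^sup>2)"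
    by (simp add: binner_self sum_subtractf)
  also have "\<dots> \<le> (\<Sum>i<m. \<Sum>j<m. P i j * (norm (y i - u j))\<^sup>2)"
  proof (rule sum_mono)
    fix i assume "i \<in> {..<m}"
    then show "(\<Sum>j<m. P i j * (norm (u j))\<^sup>2) - (norm (mix m P u i))\<^sup>2
        \<le> (\<Sum>j<m. P i j * (norm (y i - u j))\<^sup>2)"
      using assms(2) weighted_sq_dist_eq[where w = "P i" and y = "y i" and v = u]
      by (simp add: stochastic_mat_def mix_def)
  qed
  finally show ?thesis .
qed

lemma dual_ascent_identity:
  fixes a \<nu> l :: "'a::real_inner"
  assumes "\<tau> > 0"
  shows "- (a \<bullet> (\<nu> - l))
           = ((norm (\<nu> - l))\<^sup>2 - (norm (\<nu> + \<tau> *\<^sub>R a - l))\<^sup>2) / (2 * \<tau>) + \<tau> / 2 * (norm a)\<^sup>2"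
proof -
  have "(\<nu> - l) \<bullet> (\<tau> *\<^sub>R a)
      = ((norm (\<nu> - l + \<tau> *\<^sub>R a))\<^sup>2 - (norm (\<nu> - l))\<^sup>2 - (norm (\<tau> *\<^sub>R a))\<^sup>2) / 2"
    by (rule dot_norm)
  moreover have "\<nu> - l + \<tau> *\<^sub>R a = \<nu> + \<tau> *\<^sub>R a - l" by (simp add: algebra_simps)
  ultimately show ?thesis
    using assms by (simp add: field_simps inner_commute power_mult_distrib power2_eq_square)
qed

lemma binner_dual_ascent_identity:
  fixes a \<nu> \<nu>' l :: "nat \<Rightarrow> 'a::real_inner"
  assumes "\<tau> > 0" and "\<And>i. i < m \<Longrightarrow> \<nu>' i = \<nu> i + \<tau> *\<^sub>R a i"
  shows "- binner m a (\<lambda>i. \<nu> i - l i)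
           = (binner m (\<lambda>i. \<nu> i - l i) (\<lambda>i. \<nu> i - l i)
              - binner m (\<lambda>i. \<nu>' i - l i) (\<lambda>i. \<nu>' i - l i)) / (2 * \<tau>)
             + \<tau> / 2 * binner m a a"
proof -
  have "- binner m a (\<lambda>i. \<nu> i - l i) = (\<Sum>i<m. ((norm (\<nu> i - l i))\<^sup>2
      - (norm (\<nu>' i - l i))\<^sup>2) / (2 * \<tau>) + \<tau> / 2 * (norm (a i))\<^sup>2)"
    unfolding binner_def sum_negf[symmetric]
    by (intro sum.cong refl) (simp add: assms(2) dual_ascent_identity[OF assms(1)])
  then show ?thesis
    by (simp add: binner_self sum.distrib sum_subtractf sum_distrib_left
        flip: sum_divide_distrib)
qed

section \<open>Bregman divergences and first-order optimality\<close>

lemma has_derivative_grad: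
  fixes \<psi> :: "real^'n \<Rightarrow> real"
  assumes "\<psi> differentiable (at v)"
  shows "(\<psi> has_derivative (\<lambda>h. grad \<psi> v \<bullet> h)) (at v)"
proof -
  obtain \<psi>' where \<psi>': "(\<psi> has_derivative \<psi>') (at v)"
    using assms by (auto simp: differentiable_def)
  define g where "g = (\<Sum>b\<in>Basis. \<psi>' b *\<^sub>R b)"
  have "\<psi>' h = g \<bullet> h" for h
  proof -
    have "\<psi>' h = (\<Sum>b\<in>Basis. (h \<bullet> b) * \<psi>' b)"
      using Linear_Algebra.linear_componentwise[OF has_derivative_linear[OF \<psi>'], of h 1] by simp
    also have "\<dots> = g \<bullet> h"
      unfolding g_def inner_sum_left by (intro sum.cong) (simp_all add: inner_commute)
    finally show ?thesis .
  qed
  then have g: "(\<psi> has_derivative (\<lambda>h. g \<bullet> h)) (at v)"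
    using \<psi>' by (metis (no_types, lifting) ext)
  have "grad \<psi> v = g"
    unfolding grad_def
  proof (rule the_equality)
    fix g' assume "(\<psi> has_derivative (\<lambda>h. g' \<bullet> h)) (at v)"
    then have "(\<lambda>h. g' \<bullet> h) = (\<lambda>h. g \<bullet> h)" using g has_derivative_unique by blast
    then show "g' = g" by (metis vector_eq_rdot)
  qed (rule g)
  then show ?thesis using g by simp
qed

lemma has_derivative_bregman:
  fixes \<psi> :: "real^'n \<Rightarrow> real"
  assumes "\<psi> differentiable (at a)"
  shows "((\<lambda>u. bregman \<psi> u v) has_derivative (\<lambda>h. (grad \<psi> a - grad \<psi> v) \<bullet> h)) (at a)"
  unfolding bregman_def inner_diff_left
  by (auto intro!: derivative_eq_intros has_derivative_grad[OF assms])

lemma bregman_three_point: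
  "bregman \<psi> z y - bregman \<psi> a y - bregman \<psi> z a = (grad \<psi> a - grad \<psi> y) \<bullet> (z - a)"
  by (simp add: bregman_def inner_diff_left inner_diff_right algebra_simps)

lemma has_derivative_ge_of_increments:
  fixes q :: "'a::real_normed_vector \<Rightarrow> real"
  assumes q: "(q has_derivative q') (at a)"
    and incr: "\<And>s. 0 < s \<Longrightarrow> s < 1 \<Longrightarrow> s * c \<le> q (a + s *\<^sub>R d) - q a"
  shows "c \<le> q' d"
proof -
  have "((\<lambda>s::real. a + s *\<^sub>R d) has_derivative (\<lambda>s. s *\<^sub>R d)) (at 0)"
    by (auto intro!: derivative_eq_intros)
  then have "((q \<circ> (\<lambda>s. a + s *\<^sub>R d)) has_derivative (q' \<circ> (\<lambda>s. s *\<^sub>R d))) (at 0)"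
    using q by (intro diff_chain_at) simp_all
  moreover have "q' \<circ> (\<lambda>s. s *\<^sub>R d) = (*) (q' d)"
    using linear_scale[OF has_derivative_linear[OF q]] by (auto simp: fun_eq_iff)
  ultimately have "((\<lambda>s. q (a + s *\<^sub>R d)) has_field_derivative q' d) (at 0)"
    by (simp add: has_field_derivative_def comp_def)
  then have "((\<lambda>s. (q (a + s *\<^sub>R d) - q a) / s) \<longlongrightarrow> q' d) (at_right 0)"
    by (auto simp: has_field_derivative_iff filterlim_at_split)
  moreover have "\<forall>\<^sub>F s in at_right 0. c \<le> (q (a + s *\<^sub>R d) - q a) / s"
    unfolding eventually_at_right_field
    using incr by (intro exI[of _ 1]) (auto simp: field_simps)
  ultimately show ?thesis by (rule tendsto_lowerbound) simp
qed

lemma strictly_convex_on_imp_convex_on: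
  assumes "convex S" "strictly_convex_on S f"
  shows "convex_on S f"
proof (rule convex_onI[OF _ assms(1)])
  fix t :: real and x y assume "0 < t" "t < 1" "x \<in> S" "y \<in> S"
  then show "f ((1 - t) *\<^sub>R x + t *\<^sub>R y) \<le> (1 - t) * f x + t * f y"
    using assms(2) unfolding strictly_convex_on_def
    by (cases "x = y") (auto simp: algebra_simps intro: less_imp_le)
qed

lemma bregman_nonneg:
  fixes \<psi> :: "real^'n \<Rightarrow> real"
  assumes "convex_on S \<psi>" "\<psi> differentiable (at v)" "u \<in> S" "v \<in> S"
  shows "0 \<le> bregman \<psi> u v"
proof -
  have "- (\<psi> u - \<psi> v) \<le> - (grad \<psi> v \<bullet> (u - v))"
  proof (rule has_derivative_ge_of_increments[where d = "u - v"])
    show "((\<lambda>w. - \<psi> w) has_derivative (\<lambda>h. - (grad \<psi> v \<bullet> h))) (at v)"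
      by (intro has_derivative_minus has_derivative_grad assms(2))
    fix s :: real assume s: "0 < s" "s < 1"
    have "\<psi> ((1 - s) *\<^sub>R v + s *\<^sub>R u) \<le> (1 - s) * \<psi> v + s * \<psi> u"
      using s assms by (intro convex_onD) auto
    moreover have "(1 - s) *\<^sub>R v + s *\<^sub>R u = v + s *\<^sub>R (u - v)" by (simp add: algebra_simps)
    ultimately show "s * - (\<psi> u - \<psi> v) \<le> - \<psi> (v + s *\<^sub>R (u - v)) - - \<psi> v"
      by (simp add: algebra_simps)
  qed
  then show ?thesis by (simp add: bregman_def)
qed

lemma convex_fun_segment:
  fixes F :: "real^'n \<Rightarrow> ereal"
  assumes "convex_fun F" "F a = ereal A" "F z = ereal Z" "0 \<le> s" "s \<le> 1"
  shows "F ((1 - s) *\<^sub>R a + s *\<^sub>R z) \<le> ereal ((1 - s) * A + s * Z)"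
proof -
  have "(1 - s) *\<^sub>R (a, A) + s *\<^sub>R (z, Z) \<in> epigraph F"
    using assms by (intro convexD) (auto simp: convex_fun_def epigraph_def)
  then show ?thesis by (simp add: epigraph_def)
qed

lemma convex_fun_mean_le:
  fixes F :: "real^'n \<Rightarrow> ereal" and v :: "'a \<Rightarrow> real^'n"
  assumes "convex_fun F" "finite S" "S \<noteq> {}" "\<And>t. t \<in> S \<Longrightarrow> F (v t) = ereal (c t)"
  shows "F ((1 / card S) *\<^sub>R (\<Sum>t\<in>S. v t)) \<le> ereal ((1 / card S) * (\<Sum>t\<in>S. c t))"
proof -
  have "(\<Sum>t\<in>S. (1 / card S) *\<^sub>R (v t, c t)) \<in> epigraph F"
    using assms by (intro convex_sum) (auto simp: convex_fun_def epigraph_def card_gt_0_iff)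
  moreover have "(\<Sum>t\<in>S. (1 / card S) *\<^sub>R (v t, c t))
      = ((1 / card S) *\<^sub>R (\<Sum>t\<in>S. v t), (1 / card S) * (\<Sum>t\<in>S. c t))"
    by (simp add: prod_eq_iff fst_sum snd_sum scaleR_sum_right sum_distrib_left)
  ultimately show ?thesis by (simp add: epigraph_def)
qed

lemma norm_mean_sq_le:
  fixes v :: "'a \<Rightarrow> 'b::real_normed_vector"
  shows "(norm ((1 / card S) *\<^sub>R (\<Sum>t\<in>S. v t)))\<^sup>2 \<le> (1 / card S) * (\<Sum>t\<in>S. (norm (v t))\<^sup>2)"
proof -
  have "norm ((1 / card S) *\<^sub>R (\<Sum>t\<in>S. v t)) \<le> (\<Sum>t\<in>S. norm (v t)) / card S"
    using norm_sum[of v S] by (simp add: divide_right_mono field_simps)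
  then have "(norm ((1 / card S) *\<^sub>R (\<Sum>t\<in>S. v t)))\<^sup>2 \<le> ((\<Sum>t\<in>S. norm (v t)) / card S)\<^sup>2"
    by (simp add: power_mono)
  also have "\<dots> \<le> (1 / card S) * (\<Sum>t\<in>S. (norm (v t))\<^sup>2)"
    using sum_squared_le_sum_of_squares[of "\<lambda>t. norm (v t)" S]
    by (cases "card S = 0") (simp_all add: power_divide field_simps power2_eq_square)
  finally show ?thesis .
qed

lemma convex_fun_min_first_order:
  fixes F :: "real^'n \<Rightarrow> ereal" and q :: "real^'n \<Rightarrow> real"
  assumes "convex_fun F" "convex C" "a \<in> C" "z \<in> C"
    and Fa: "F a = ereal A" and Fz: "F z = ereal Z"
    and q: "(q has_derivative q') (at a)"
    and min: "\<And>w. w \<in> C \<Longrightarrow> F a + ereal (q a) \<le> F w + ereal (q w)"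
  shows "A - Z \<le> q' (z - a)"
proof (rule has_derivative_ge_of_increments[OF q])
  fix s :: real assume s: "0 < s" "s < 1"
  have seg: "a + s *\<^sub>R (z - a) = (1 - s) *\<^sub>R a + s *\<^sub>R z" by (simp add: algebra_simps)
  have "ereal (A + q a) \<le> F (a + s *\<^sub>R (z - a)) + ereal (q (a + s *\<^sub>R (z - a)))"
    using min[of "a + s *\<^sub>R (z - a)"] assms(2-4) s Fa unfolding seg
    by (simp add: convexD)
  also have "\<dots> \<le> ereal ((1 - s) * A + s * Z) + ereal (q (a + s *\<^sub>R (z - a)))"
    using convex_fun_segment[OF assms(1) Fa Fz, of s] s unfolding seg
    by (intro add_right_mono) simp
  finally show "s * (A - Z) \<le> q (a + s *\<^sub>R (z - a)) - q a"
    by (simp add: algebra_simps)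
qed

lemma convex_fun_zero: "convex_fun (\<lambda>_. 0)"
  unfolding convex_fun_def epigraph_def convex_def by (auto simp: zero_ereal_def)

lemma sum_atLeast1_atMost_Suc: "(\<Sum>t\<in>{1..T}. g t) = (\<Sum>t<T. g (Suc t))"
  using sum.atLeast1_atMost_eq[of g T] by simp

section \<open>The primal-dual iteration\<close>

(* kappa plays the role of mu sigma: a Euclidean strong-convexity modulus of phi on X \<inter> D. *)
locale mirror_admm =
  fixes m :: nat and X D :: "(real^'n) set" and f :: "nat \<Rightarrow> real^'n \<Rightarrow> ereal"
    and vphi :: "nat \<Rightarrow> real^'n \<Rightarrow> real" and phi :: "real^'n \<Rightarrow> real"
    and P :: "nat \<Rightarrow> nat \<Rightarrow> real" and xs nus :: "nat \<Rightarrow> real^'n"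
    and \<kappa> \<tau> \<rho> \<gamma> :: real and \<delta> :: "nat \<Rightarrow> real"
    and x y \<nu> :: "nat \<Rightarrow> nat \<Rightarrow> real^'n"
  assumes convex_X: "convex X" and convex_D: "convex D"
    and f_convex: "\<And>i. i < m \<Longrightarrow> convex_fun (f i)"
    and f_proper: "\<And>i. i < m \<Longrightarrow> proper_fun (f i)"
    and xs_in: "\<And>i. i < m \<Longrightarrow> xs i \<in> X \<inter> D"
    and xs_consensus: "\<And>i. i < m \<Longrightarrow> mix m P xs i = xs i"
    and saddle: "\<And>i. i < m \<Longrightarrow> \<exists>g\<in>normal_cone X (xs i).
                   - disagreement m P nus i - g \<in> subdiff (f i) (xs i)"
    and phi_differentiable: "\<And>z. z \<in> D \<Longrightarrow> phi differentiable (at z)"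
    and phi_strongly_convex: "\<And>u v. u \<in> X \<inter> D \<Longrightarrow> v \<in> X \<inter> D \<Longrightarrow>
                   \<kappa> / 2 * (norm (u - v))\<^sup>2 \<le> bregman phi u v"
    and vphi_convex: "\<And>i. i < m \<Longrightarrow> convex_on D (vphi i)"
    and vphi_differentiable: "\<And>i z. i < m \<Longrightarrow> z \<in> D \<Longrightarrow> vphi i differentiable (at z)"
    and P: "symmetric_mat m P" "stochastic_mat m P" "psd_mat m P"
    and tau: "0 < \<tau>" and rho: "0 < \<rho>" and gamma: "0 < \<gamma>"
    and delta: "\<And>i. i < m \<Longrightarrow> 0 \<le> \<delta> i"
    and step_size: "\<tau> \<le> \<rho> * (\<kappa> - \<gamma>)"
    and x0: "\<And>i. i < m \<Longrightarrow> x 0 i \<in> X \<inter> D"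
    and y_step: "\<And>t i. i < m \<Longrightarrow> y t i \<in> X \<inter> D \<and>
          (\<forall>z\<in>X \<inter> D. (\<Sum>j<m. P i j * bregman phi (y t i) (x t j))
                        \<le> (\<Sum>j<m. P i j * bregman phi z (x t j)))"
    and x_step: "\<And>t i. i < m \<Longrightarrow> x (Suc t) i \<in> X \<inter> D \<and>
          (\<forall>z\<in>X \<inter> D.
             f i (x (Suc t) i) + ereal (x (Suc t) i \<bullet> disagreement m P (\<nu> t) i
                + \<rho> * bregman phi (x (Suc t) i) (y t i)
                + \<delta> i * bregman (vphi i) (x (Suc t) i) (x t i))
             \<le> f i z + ereal (z \<bullet> disagreement m P (\<nu> t) i
                + \<rho> * bregman phi z (y t i)
                + \<delta> i * bregman (vphi i) z (x t i)))"
    and nu_step: "\<And>t i. i < m \<Longrightarrow> \<nu> (Suc t) i = \<nu> t i + \<tau> *\<^sub>R disagreement m P (x (Suc t)) i"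
begin

lemma x_in: "i < m \<Longrightarrow> x t i \<in> X \<inter> D"
  by (cases t) (use x0 x_step in blast)+

lemma y_in: "i < m \<Longrightarrow> y t i \<in> X \<inter> D"
  using y_step by blast

lemma gamma_less_kappa: "\<gamma> < \<kappa>"
proof -
  have "0 < \<rho> * (\<kappa> - \<gamma>)" using tau step_size by linarith
  then show ?thesis using rho by (simp add: zero_less_mult_iff)
qed

lemma bregman_phi_nonneg:
  assumes "u \<in> X \<inter> D" "v \<in> X \<inter> D"
  shows "0 \<le> bregman phi u v"
proof -
  have "0 \<le> \<kappa> / 2 * (norm (u - v))\<^sup>2" using gamma_less_kappa gamma by simp
  then show ?thesis using phi_strongly_convex[OF assms] by linarith
qed

lemma bregman_vphi_nonneg: "i < m \<Longrightarrow> u \<in> D \<Longrightarrow> v \<in> D \<Longrightarrow> 0 \<le> bregman (vphi i) u v"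
  using bregman_nonneg vphi_convex vphi_differentiable by blast

(* Only used at points where f i is finite, see f_xs_finite and f_x_finite. *)
definition f_real :: "nat \<Rightarrow> real^'n \<Rightarrow> real" where
  "f_real i u = real_of_ereal (f i u)"

lemma f_xs_finite: "i < m \<Longrightarrow> f i (xs i) = ereal (f_real i (xs i))"
  using saddle[of i] f_proper[of i]
  by (cases "f i (xs i)") (auto simp: f_real_def subdiff_def proper_fun_def)

lemma f_x_finite:
  assumes i: "i < m"
  shows "f i (x (Suc t) i) = ereal (f_real i (x (Suc t) i))"
proof -
  have "f i (x (Suc t) i) \<noteq> \<infinity>"
    using x_step[OF i, of t] xs_in[OF i] f_xs_finite[OF i] by force
  then show ?thesis
    using f_proper[OF i] by (cases "f i (x (Suc t) i)") (auto simp: f_real_def proper_fun_def)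
qed

lemma x_step_first_order:
  assumes i: "i < m"
  shows "f_real i (x (Suc t) i) - f_real i (xs i)
    \<le> (xs i - x (Suc t) i) \<bullet> disagreement m P (\<nu> t) i
      + \<rho> * (bregman phi (xs i) (y t i) - bregman phi (x (Suc t) i) (y t i)
              - bregman phi (xs i) (x (Suc t) i))
      + \<delta> i * (bregman (vphi i) (xs i) (x t i) - bregman (vphi i) (x (Suc t) i) (x t i)
              - bregman (vphi i) (xs i) (x (Suc t) i))"
proof -
  let ?a = "x (Suc t) i" and ?w = "disagreement m P (\<nu> t) i"
  have "((\<lambda>u. u \<bullet> ?w + \<rho> * bregman phi u (y t i) + \<delta> i * bregman (vphi i) u (x t i))
      has_derivative (\<lambda>h. h \<bullet> ?w + \<rho> * ((grad phi ?a - grad phi (y t i)) \<bullet> h)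
                        + \<delta> i * ((grad (vphi i) ?a - grad (vphi i) (x t i)) \<bullet> h))) (at ?a)"
    using x_in[OF i] i phi_differentiable vphi_differentiable
    by (intro has_derivative_add has_derivative_mult_right has_derivative_bregman
        bounded_linear_imp_has_derivative bounded_linear_inner_left) auto
  then have "f_real i ?a - f_real i (xs i) \<le> (xs i - ?a) \<bullet> ?w
      + \<rho> * ((grad phi ?a - grad phi (y t i)) \<bullet> (xs i - ?a))
      + \<delta> i * ((grad (vphi i) ?a - grad (vphi i) (x t i)) \<bullet> (xs i - ?a))"
    using x_step[OF i, of t] xs_in[OF i] convex_X convex_D
    by (intro convex_fun_min_first_order[OF f_convex[OF i], where C = "X \<inter> D"])
      (auto simp: convex_Int f_x_finite[OF i] f_xs_finite[OF i])
  then show ?thesis by (simp only: bregman_three_point)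
qed

lemma y_step_first_order:
  assumes i: "i < m"
  shows "bregman phi (xs i) (y t i)
    \<le> (\<Sum>j<m. P i j * bregman phi (xs i) (x t j)) - (\<Sum>j<m. P i j * bregman phi (y t i) (x t j))"
proof -
  let ?a = "y t i"
  have "((\<lambda>u. \<Sum>j<m. P i j * bregman phi u (x t j))
      has_derivative (\<lambda>h. \<Sum>j<m. P i j * ((grad phi ?a - grad phi (x t j)) \<bullet> h))) (at ?a)"
    using y_in[OF i] phi_differentiable
    by (intro has_derivative_sum has_derivative_mult_right has_derivative_bregman) auto
  then have "0 - 0 \<le> (\<Sum>j<m. P i j * ((grad phi ?a - grad phi (x t j)) \<bullet> (xs i - ?a)))"
    using y_step[OF i, of t] xs_in[OF i] convex_X convex_D
    by (intro convex_fun_min_first_order[OF convex_fun_zero, where C = "X \<inter> D"])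
      (auto simp: convex_Int)
  also have "\<dots> = (\<Sum>j<m. P i j * bregman phi (xs i) (x t j))
      - (\<Sum>j<m. P i j * bregman phi ?a (x t j)) - (\<Sum>j<m. P i j) * bregman phi (xs i) ?a"
    by (simp add: bregman_three_point[symmetric] right_diff_distrib sum_subtractf sum_distrib_right)
  finally show ?thesis
    using P(2) i by (simp add: stochastic_mat_def)
qed

lemma binner_diff_xs_disagreement:
  "binner m (\<lambda>i. u i - xs i) (disagreement m P v) = binner m (disagreement m P u) v"
proof -
  have "binner m (disagreement m P xs) v = 0"
    using xs_consensus by (simp add: binner_def disagreement_def)
  then show ?thesis
    by (simp add: binner_diff_left binner_disagreement_swap[OF P(1)])
qed

lemma y_step_descent:
  "(\<Sum>i<m. bregman phi (xs i) (y t i))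
     + \<kappa> / 2 * binner m (disagreement m P (x t)) (disagreement m P (x t))
   \<le> (\<Sum>i<m. bregman phi (xs i) (x t i))"
proof -
  have "binner m (disagreement m P (x t)) (disagreement m P (x t))
      \<le> (\<Sum>i<m. \<Sum>j<m. P i j * (norm (y t i - x t j))\<^sup>2)"
    using norm_disagreement_sq_le[OF P] norm_sq_minus_norm_mix_sq_le[OF P(1,2)] by (rule order_trans)
  then have "\<kappa> / 2 * binner m (disagreement m P (x t)) (disagreement m P (x t))
      \<le> \<kappa> / 2 * (\<Sum>i<m. \<Sum>j<m. P i j * (norm (y t i - x t j))\<^sup>2)"
    using gamma_less_kappa gamma by (intro mult_left_mono) auto
  also have "\<dots> = (\<Sum>i<m. \<Sum>j<m. P i j * (\<kappa> / 2 * (norm (y t i - x t j))\<^sup>2))"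
    by (simp add: sum_distrib_left mult_ac)
  also have "\<dots> \<le> (\<Sum>i<m. \<Sum>j<m. P i j * bregman phi (y t i) (x t j))"
    using P(2) by (intro sum_mono mult_left_mono phi_strongly_convex y_in x_in)
      (auto simp: stochastic_mat_def)
  also have "\<dots> \<le> (\<Sum>i<m. \<Sum>j<m. P i j * bregman phi (xs i) (x t j))
      - (\<Sum>i<m. bregman phi (xs i) (y t i))"
    using sum_mono[of "{..<m}" "\<lambda>i. bregman phi (xs i) (y t i)", OF y_step_first_order]
    by (simp add: sum_subtractf)
  also have "(\<Sum>i<m. \<Sum>j<m. P i j * bregman phi (xs i) (x t j)) = (\<Sum>i<m. bregman phi (xs i) (x t i))"
    by (rule mix_fixed_sum[OF P(1,2) xs_consensus])
  finally show ?thesis by simp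
qed

definition obj_gap :: "nat \<Rightarrow> real" where
  "obj_gap t = (\<Sum>i<m. f_real i (x (Suc t) i) - f_real i (xs i))"

lemma x_step_descent:
  "obj_gap t \<le> - binner m (disagreement m P (x (Suc t))) (\<nu> t)
      + \<rho> * ((\<Sum>i<m. bregman phi (xs i) (y t i)) - (\<Sum>i<m. bregman phi (xs i) (x (Suc t) i)))
      + ((\<Sum>i<m. \<delta> i * bregman (vphi i) (xs i) (x t i))
         - (\<Sum>i<m. \<delta> i * bregman (vphi i) (xs i) (x (Suc t) i)))"
proof -
  have "obj_gap t \<le> (\<Sum>i<m. (xs i - x (Suc t) i) \<bullet> disagreement m P (\<nu> t) i
      + \<rho> * (bregman phi (xs i) (y t i) - bregman phi (xs i) (x (Suc t) i))
      + (\<delta> i * bregman (vphi i) (xs i) (x t i) - \<delta> i * bregman (vphi i) (xs i) (x (Suc t) i)))"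
    unfolding obj_gap_def
  proof (rule sum_mono)
    fix i assume "i \<in> {..<m}"
    then have i: "i < m" by simp
    have "0 \<le> \<rho> * bregman phi (x (Suc t) i) (y t i)"
      using rho bregman_phi_nonneg[OF x_in[OF i] y_in[OF i]] by simp
    moreover have "0 \<le> \<delta> i * bregman (vphi i) (x (Suc t) i) (x t i)"
      using delta[OF i] x_in[OF i] by (simp add: bregman_vphi_nonneg i)
    ultimately show "f_real i (x (Suc t) i) - f_real i (xs i) \<le> (xs i - x (Suc t) i) \<bullet> disagreement m P (\<nu> t) i
      + \<rho> * (bregman phi (xs i) (y t i) - bregman phi (xs i) (x (Suc t) i))
      + (\<delta> i * bregman (vphi i) (xs i) (x t i) - \<delta> i * bregman (vphi i) (xs i) (x (Suc t) i))"
      using x_step_first_order[OF i, of t] by (simp add: algebra_simps)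
  qed
  also have "\<dots> = - binner m (disagreement m P (x (Suc t))) (\<nu> t)
      + \<rho> * ((\<Sum>i<m. bregman phi (xs i) (y t i)) - (\<Sum>i<m. bregman phi (xs i) (x (Suc t) i)))
      + ((\<Sum>i<m. \<delta> i * bregman (vphi i) (xs i) (x t i))
         - (\<Sum>i<m. \<delta> i * bregman (vphi i) (xs i) (x (Suc t) i)))"
    using binner_diff_xs_disagreement[of "x (Suc t)" "\<nu> t"]
    by (simp add: binner_def inner_diff_left sum.distrib sum_subtractf sum_negf
        sum_distrib_left right_diff_distrib)
  finally show ?thesis .
qed

lemma obj_gap_lower: "- binner m nus (disagreement m P (x (Suc t))) \<le> obj_gap t"
proof -
  have "- (disagreement m P nus i \<bullet> (x (Suc t) i - xs i)) \<le> f_real i (x (Suc t) i) - f_real i (xs i)"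
    if i: "i < m" for i
  proof -
    obtain g where g: "g \<in> normal_cone X (xs i)"
      and sub: "- disagreement m P nus i - g \<in> subdiff (f i) (xs i)"
      using saddle[OF i] by blast
    have "ereal (f_real i (xs i) + (- disagreement m P nus i - g) \<bullet> (x (Suc t) i - xs i))
        \<le> f i (x (Suc t) i)"
      using sub f_xs_finite[OF i] by (simp add: subdiff_def)
    then have "f_real i (xs i) + (- disagreement m P nus i - g) \<bullet> (x (Suc t) i - xs i)
        \<le> f_real i (x (Suc t) i)"
      using f_x_finite[OF i, of t] by simp
    moreover have "0 \<le> g \<bullet> (xs i - x (Suc t) i)"
      using g x_in[OF i, of "Suc t"] by (simp add: normal_cone_def)
    ultimately show ?thesis by (simp add: inner_diff_left inner_diff_right)
  qed
  then have "- (\<Sum>i<m. disagreement m P nus i \<bullet> (x (Suc t) i - xs i)) \<le> obj_gap t"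
    unfolding obj_gap_def sum_negf[symmetric] by (intro sum_mono) simp
  moreover have "(\<Sum>i<m. disagreement m P nus i \<bullet> (x (Suc t) i - xs i))
      = binner m nus (disagreement m P (x (Suc t)))"
    using binner_diff_xs_disagreement[of "x (Suc t)" nus]
    by (simp add: binner_def inner_commute binner_commute[of m nus])
  ultimately show ?thesis by simp
qed

definition lyapunov :: "(nat \<Rightarrow> real^'n) \<Rightarrow> nat \<Rightarrow> real" where
  "lyapunov l t = binner m (\<lambda>i. \<nu> t i - l i) (\<lambda>i. \<nu> t i - l i) / (2 * \<tau>)
     + \<rho> * (\<Sum>i<m. bregman phi (xs i) (y t i))
     + (\<Sum>i<m. \<delta> i * bregman (vphi i) (xs i) (x t i))"

lemma lyapunov_nonneg: "0 \<le> lyapunov l t"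
proof -
  have "0 \<le> (\<Sum>i<m. bregman phi (xs i) (y t i))"
    by (intro sum_nonneg bregman_phi_nonneg xs_in y_in) simp_all
  moreover have "0 \<le> (\<Sum>i<m. \<delta> i * bregman (vphi i) (xs i) (x t i))"
    using xs_in x_in by (intro sum_nonneg mult_nonneg_nonneg delta bregman_vphi_nonneg) auto
  moreover have "0 \<le> binner m (\<lambda>i. \<nu> t i - l i) (\<lambda>i. \<nu> t i - l i) / (2 * \<tau>)"
    using tau by (intro divide_nonneg_pos binner_self_nonneg) simp
  ultimately show ?thesis
    unfolding lyapunov_def using rho by simp
qed

(* The step-size condition tau <= rho (kappa - gamma) is exactly what lets the strong convexity
   gained in the y-step absorb the tau/2-term produced by the dual ascent. *)
lemma lyapunov_decrease:
  "obj_gap t + binner m l (disagreement m P (x (Suc t)))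
     + \<rho> * \<gamma> / 2 * binner m (disagreement m P (x (Suc t))) (disagreement m P (x (Suc t)))
   \<le> lyapunov l t - lyapunov l (Suc t)"
proof -
  let ?a = "disagreement m P (x (Suc t))"
  have dual: "- binner m ?a (\<lambda>i. \<nu> t i - l i)
      = (binner m (\<lambda>i. \<nu> t i - l i) (\<lambda>i. \<nu> t i - l i)
         - binner m (\<lambda>i. \<nu> (Suc t) i - l i) (\<lambda>i. \<nu> (Suc t) i - l i)) / (2 * \<tau>)
        + \<tau> / 2 * binner m ?a ?a"
    by (rule binner_dual_ascent_identity[OF tau nu_step])
  have "\<tau> / 2 * binner m ?a ?a + \<rho> * \<gamma> / 2 * binner m ?a ?a \<le> \<rho> * (\<kappa> / 2 * binner m ?a ?a)"
    using mult_right_mono[OF step_size binner_self_nonneg, of m ?a] by (simp add: algebra_simps)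
  moreover have "\<rho> * (\<Sum>i<m. bregman phi (xs i) (y (Suc t) i)) + \<rho> * (\<kappa> / 2 * binner m ?a ?a)
      \<le> \<rho> * (\<Sum>i<m. bregman phi (xs i) (x (Suc t) i))"
    using mult_left_mono[OF y_step_descent[of "Suc t"]] rho by (simp add: distrib_left)
  moreover have "binner m ?a (\<lambda>i. \<nu> t i - l i) = binner m ?a (\<nu> t) - binner m l ?a"
    by (simp add: binner_diff_right binner_commute[of m l])
  ultimately show ?thesis
    using x_step_descent[of t, unfolded right_diff_distrib] dual
    unfolding lyapunov_def diff_divide_distrib by linarith
qed

lemma lyapunov_telescope:
  "(\<Sum>t<T. obj_gap t + binner m l (disagreement m P (x (Suc t))))
     + \<rho> * \<gamma> / 2 * (\<Sum>t<T. binner m (disagreement m P (x (Suc t))) (disagreement m P (x (Suc t))))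
   \<le> lyapunov l 0"
proof -
  have "(\<Sum>t<T. obj_gap t + binner m l (disagreement m P (x (Suc t)))
          + \<rho> * \<gamma> / 2 * binner m (disagreement m P (x (Suc t))) (disagreement m P (x (Suc t))))
      \<le> (\<Sum>t<T. lyapunov l t - lyapunov l (Suc t))"
    by (intro sum_mono lyapunov_decrease)
  also have "\<dots> = lyapunov l 0 - lyapunov l T" by (rule sum_lessThan_telescope')
  finally show ?thesis
    using lyapunov_nonneg[of l T] by (simp add: sum.distrib sum_distrib_left)
qed

lemma obj_gap_sum_le:
  assumes "\<And>i. i < m \<Longrightarrow> \<nu> 0 i = 0"
  shows "(\<Sum>t<T. obj_gap t)
    \<le> \<rho> * (\<Sum>i<m. bregman phi (xs i) (y 0 i)) + (\<Sum>i<m. \<delta> i * bregman (vphi i) (xs i) (x 0 i))"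
proof -
  have "0 \<le> \<rho> * \<gamma> / 2 * (\<Sum>t<T. binner m (disagreement m P (x (Suc t))) (disagreement m P (x (Suc t))))"
    using rho gamma by (intro mult_nonneg_nonneg sum_nonneg binner_self_nonneg) auto
  then show ?thesis
    using lyapunov_telescope[where T = T and l = "\<lambda>_. 0"] assms by (simp add: lyapunov_def binner_def)
qed

lemma disagreement_sum_le:
  "(\<Sum>t<T. binner m (disagreement m P (x (Suc t))) (disagreement m P (x (Suc t))))
     \<le> 2 * lyapunov nus 0 / (\<rho> * \<gamma>)"
proof -
  have "0 \<le> (\<Sum>t<T. obj_gap t + binner m nus (disagreement m P (x (Suc t))))"
  proof (intro sum_nonneg)
    fix t show "0 \<le> obj_gap t + binner m nus (disagreement m P (x (Suc t)))"
      using obj_gap_lower[of t] by linarith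
  qed
  then have "\<rho> * \<gamma> / 2 * (\<Sum>t<T. binner m (disagreement m P (x (Suc t))) (disagreement m P (x (Suc t))))
      \<le> lyapunov nus 0"
    using lyapunov_telescope[where T = T and l = nus] by linarith
  then show ?thesis using rho gamma by (simp add: field_simps)
qed

definition xbar :: "nat \<Rightarrow> nat \<Rightarrow> real^'n" where
  "xbar T i = (1 / real T) *\<^sub>R (\<Sum>t\<in>{1..T}. x t i)"

lemma f_xbar_le:
  assumes "1 \<le> T" "i < m"
  shows "f i (xbar T i) \<le> ereal (1 / real T * (\<Sum>t<T. f_real i (x (Suc t) i)))"
proof -
  have "f i (x t i) = ereal (f_real i (x t i))" if "t \<in> {1..T}" for t
    using that f_x_finite[OF assms(2)] by (cases t) auto
  then show ?thesis
    using convex_fun_mean_le[OF f_convex[OF assms(2)], of "{1..T}" "\<lambda>t. x t i" "\<lambda>t. f_real i (x t i)"]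
      assms(1)
    unfolding xbar_def sum_atLeast1_atMost_Suc by simp
qed

lemma ergodic_obj_gap:
  assumes "1 \<le> T" and "\<And>i. i < m \<Longrightarrow> \<nu> 0 i = 0"
  shows "(\<Sum>i<m. f i (xbar T i)) - (\<Sum>i<m. f i (xs i))
    \<le> ereal (1 / real T * (\<rho> * (\<Sum>i<m. bregman phi (xs i) (y 0 i))
                            + (\<Sum>i<m. \<delta> i * bregman (vphi i) (xs i) (x 0 i))))"
proof -
  have "(\<Sum>i<m. f i (xbar T i)) \<le> (\<Sum>i<m. ereal (1 / real T * (\<Sum>t<T. f_real i (x (Suc t) i))))"
    using f_xbar_le[OF assms(1)] by (intro sum_mono) simp
  then have "(\<Sum>i<m. f i (xbar T i)) - (\<Sum>i<m. f i (xs i))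
      \<le> ereal (\<Sum>i<m. 1 / real T * (\<Sum>t<T. f_real i (x (Suc t) i))) - ereal (\<Sum>i<m. f_real i (xs i))"
    by (intro ereal_minus_mono) (simp_all add: f_xs_finite)
  also have "\<dots> = ereal (1 / real T * (\<Sum>t<T. obj_gap t))"
  proof -
    have "(\<Sum>t<T. obj_gap t)
        = (\<Sum>i<m. \<Sum>t<T. f_real i (x (Suc t) i)) - real T * (\<Sum>i<m. f_real i (xs i))"
      unfolding obj_gap_def sum_subtractf by (subst sum.swap) simp
    then show ?thesis using assms(1) by (simp add: field_simps flip: sum_divide_distrib)
  qed
  also have "\<dots> \<le> ereal (1 / real T * (\<rho> * (\<Sum>i<m. bregman phi (xs i) (y 0 i))
                            + (\<Sum>i<m. \<delta> i * bregman (vphi i) (xs i) (x 0 i))))"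
    using obj_gap_sum_le[OF assms(2), of T] by (simp add: divide_right_mono)
  finally show ?thesis .
qed

lemma disagreement_xbar:
  "disagreement m P (xbar T) i = (1 / real T) *\<^sub>R (\<Sum>t\<in>{1..T}. disagreement m P (x t) i)"
  by (simp add: disagreement_def mix_def xbar_def scaleR_sum_right scaleR_diff_right
      sum_subtractf) (rule sum.swap)

lemma lyapunov_0_div_rho:
  "lyapunov l 0 / \<rho> = 1 / (2 * \<tau> * \<rho>) * (\<Sum>i<m. (norm (l i - \<nu> 0 i))\<^sup>2)
     + (\<Sum>i<m. bregman phi (xs i) (y 0 i)) + (\<Sum>i<m. \<delta> i / \<rho> * bregman (vphi i) (xs i) (x 0 i))"
  using rho by (simp add: lyapunov_def binner_self norm_minus_commute add_divide_distrib
      sum_divide_distrib)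

lemma ergodic_disagreement:
  assumes "1 \<le> T"
  shows "1 / 2 * binner m (disagreement m P (xbar T)) (disagreement m P (xbar T))
    \<le> lyapunov nus 0 / \<rho> / (\<gamma> * real T)"
proof -
  have "binner m (disagreement m P (xbar T)) (disagreement m P (xbar T))
      \<le> (\<Sum>i<m. 1 / real T * (\<Sum>t\<in>{1..T}. (norm (disagreement m P (x t) i))\<^sup>2))"
    unfolding binner_self disagreement_xbar
    using norm_mean_sq_le[where v = "\<lambda>t. disagreement m P (x t) _" and S = "{1..T}"]
    by (intro sum_mono) simp
  also have "\<dots> = 1 / real T * (\<Sum>t<T. binner m (disagreement m P (x (Suc t))) (disagreement m P (x (Suc t))))"
    unfolding sum_distrib_left[symmetric] sum_atLeast1_atMost_Suc
    by (subst sum.swap) (simp add: binner_self)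
  also have "\<dots> \<le> 1 / real T * (2 * lyapunov nus 0 / (\<rho> * \<gamma>))"
    by (intro mult_left_mono disagreement_sum_le) simp
  finally show ?thesis using assms by (simp add: field_simps)
qed

end

theorem theorem2:
  fixes m :: nat and E :: "nat \<Rightarrow> nat \<Rightarrow> bool"
    and X D :: "(real^'n) set"
    and f :: "nat \<Rightarrow> real^'n \<Rightarrow> ereal"
    and vphi :: "nat \<Rightarrow> real^'n \<Rightarrow> real" and phi :: "real^'n \<Rightarrow> real"
    and P :: "nat \<Rightarrow> nat \<Rightarrow> real"
    and xs nus :: "nat \<Rightarrow> real^'n"
    and \<mu> p \<tau> \<rho> \<gamma> :: real and \<delta> :: "nat \<Rightarrow> real"
    and x y \<nu> :: "nat \<Rightarrow> nat \<Rightarrow> real^'n"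
    and T :: nat
  assumes graph: "1 \<le> m" "connected_graph m E"
    and X: "closed X" "convex X"
    and f: "\<forall>i<m. closed_fun (f i) \<and> proper_fun (f i) \<and> convex_fun (f i)"
    and opt: "\<forall>i<m. xs i \<in> X \<and> xs i \<in> D"
      "\<forall>i<m. (\<Sum>j<m. P i j *\<^sub>R xs j) = xs i"
      "\<forall>i<m. \<exists>g\<in>normal_cone X (xs i).
          - nus i + (\<Sum>j<m. P i j *\<^sub>R nus j) - g \<in> subdiff (f i) (xs i)"
    and D: "open D" "convex D" "X \<subseteq> closure D"
    and vphi: "\<forall>i<m. strictly_convex_on D (vphi i) \<and> (\<forall>z\<in>D. vphi i differentiable (at z))"
    and phi: "mirror_map D phi"
      "\<forall>u\<in>X \<inter> D. \<forall>v\<in>X \<inter> D. bregman phi u v \<ge> \<mu> / 2 * (pnorm p (u - v))\<^sup>2"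
    and p: "1 \<le> p"
    and P: "symmetric_mat m P" "stochastic_mat m P" "irreducible_mat m P" "psd_mat m P"
      "\<forall>i<m. \<forall>j<m. P i j > 0 \<longrightarrow> j \<in> neighbors E i"
    and par: "\<tau> > 0" "\<rho> > 0" "\<forall>i<m. \<delta> i \<ge> 0"
    and init: "\<forall>i<m. x 0 i \<in> X \<inter> D" "\<forall>i<m. \<nu> 0 i = 0"
    and y_step: "\<forall>t. \<forall>i<m. y t i \<in> X \<inter> D \<and>
        (\<forall>z\<in>X \<inter> D. (\<Sum>j<m. P i j * bregman phi (y t i) (x t j))
                      \<le> (\<Sum>j<m. P i j * bregman phi z (x t j)))"
    and x_step: "\<forall>t. \<forall>i<m. x (Suc t) i \<in> X \<inter> D \<and>
        (\<forall>z\<in>X \<inter> D.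
           f i (x (Suc t) i) + ereal (x (Suc t) i \<bullet> (\<nu> t i - (\<Sum>j<m. P i j *\<^sub>R \<nu> t j))
              + \<rho> * bregman phi (x (Suc t) i) (y t i)
              + \<delta> i * bregman (vphi i) (x (Suc t) i) (x t i))
           \<le> f i z + ereal (z \<bullet> (\<nu> t i - (\<Sum>j<m. P i j *\<^sub>R \<nu> t j))
              + \<rho> * bregman phi z (y t i)
              + \<delta> i * bregman (vphi i) z (x t i)))"
    and nu_step: "\<forall>t. \<forall>i<m. \<nu> (Suc t) i =
        \<nu> t i + \<tau> *\<^sub>R x (Suc t) i - \<tau> *\<^sub>R (\<Sum>j<m. P i j *\<^sub>R x (Suc t) j)"
    and gamma: "0 < \<gamma>" "\<gamma> < \<mu> * min 1 (real CARD('n) powr (2 / p - 1))"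
    and tau: "\<tau> \<le> \<rho> * (\<mu> * min 1 (real CARD('n) powr (2 / p - 1)) - \<gamma>)"
    and T: "1 \<le> T"
  shows
    "let xbar = (\<lambda>i. (1 / real T) *\<^sub>R (\<Sum>t\<in>{1..T}. x t i));
         V0 = 1 / (2 * \<tau> * \<rho>) * (\<Sum>i<m. (norm (nus i - \<nu> 0 i))\<^sup>2)
              + (\<Sum>i<m. bregman phi (xs i) (y 0 i))
              + (\<Sum>i<m. \<delta> i / \<rho> * bregman (vphi i) (xs i) (x 0 i))
     in (\<Sum>i<m. f i (xbar i)) - (\<Sum>i<m. f i (xs i))
          \<le> ereal (1 / real T * (\<rho> * (\<Sum>i<m. bregman phi (xs i) (y 0 i))
                     + (\<Sum>i<m. \<delta> i * bregman (vphi i) (xs i) (x 0 i))))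
        \<and> 1 / 2 * (\<Sum>i<m. (norm (xbar i - (\<Sum>j<m. P i j *\<^sub>R xbar j)))\<^sup>2)
          \<le> V0 / (\<gamma> * real T)"
proof -
  let ?\<sigma> = "min 1 (real CARD('n) powr (2 / p - 1))"
  have "0 < \<mu> * ?\<sigma>" "0 < ?\<sigma>" using gamma by simp_all
  then have \<mu>: "0 \<le> \<mu> / 2" by (simp add: zero_less_mult_iff)
  have phi_strong: "\<mu> * ?\<sigma> / 2 * (norm (u - v))\<^sup>2 \<le> bregman phi u v"
    if "u \<in> X \<inter> D" "v \<in> X \<inter> D" for u v
  proof -
    have "\<mu> * ?\<sigma> / 2 * (norm (u - v))\<^sup>2 \<le> \<mu> / 2 * (pnorm p (u - v))\<^sup>2"
      using mult_left_mono[OF norm_sq_le_pnorm_sq[OF p, of "u - v"] \<mu>] by simp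
    then show ?thesis using phi(2)[rule_format, OF that] by linarith
  qed
  interpret mirror_admm m X D f vphi phi P xs nus "\<mu> * ?\<sigma>" \<tau> \<rho> \<gamma> \<delta> x y \<nu>
    using X D f opt vphi phi(1) P par init y_step x_step nu_step gamma tau phi_strong
    by unfold_locales
      (auto simp: mix_def disagreement_def mirror_map_def scaleR_diff_right
        intro: strictly_convex_on_imp_convex_on)
  show ?thesis
    using ergodic_obj_gap[OF T init(2)[rule_format]] ergodic_disagreement[OF T]
    unfolding Let_def lyapunov_0_div_rho
    by (simp only: xbar_def binner_self disagreement_def mix_def)
qed

end
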